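(* Let $(G_n)_{n\in\mathbb{N}}$ be a sequence of groups equipped with a diverse $d$-ary cloning system. Then the normalizer of $F_d$ in $\mathscr{T}_d(G_* )$ equals $F_d$, i.e. $\{x\in\mathscr{T}_d(G_* ): x^{-1}F_dx=F_d\}=F_d$.
   Context: Fix an integer $d\ge 2$. A $d$-ary tree is a finite rooted tree in which each non-leaf vertex has exactly $d$ ordered children; leaves are numbered $1,\dots,n$ left to right. For $1\le k\le n$, $T_k$ is $T$ with a $d$-ary caret attached to its $k$-th leaf. Standard cloning maps: for $\sigma\in S_n$, $1\le k\le n$, partition $\{1,\dots,n+d-1\}$ into consecutive blocks $B^{(k)}_j=\{j\}$ ($j<k$), $B^{(k)}_k=\{k,\dots,k+d-1\}$, $B^{(k)}_j=\{j+d-1\}$ ($j>k$); $(\sigma)\varsigma_k^n$ maps $B^{(k)}_j$ onto $B^{(\sigma(k))}_{\sigma(j)}$ order-preservingly. A $d$-ary cloning system: groups $(G_n)$, homomorphisms $\rho_n:G_n\to S_n$, injective functions $\kappa_k^n:G_n\to G_{n+d-1}$ written on the right with $(g)(\kappa\circ\kappa'):=((g)\kappa)\kappa'$, such that for $1\le k<\ell\le n$, $g,h\in G_n$: (C1) $(gh)\kappa_k^n=(g)\kappa^n_{\rho_n(h)k}(h)\kappa_k^n$; (C2) $\kappa_\ell^n\circ\kappa_k^{n+d-1}=\kappa_k^n\circ\kappa_{\ell+d-1}^{n+d-1}$; (C3) $\rho_{n+d-1}((g)\kappa_k^n)(i)=((\rho_n(g))\varsigma_k^n)(i)$ for $i\notin\{k,\dots,k+d-1\}$.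 $\mathscr{T}_d(G_* )$: classes $[T,g,U]$ ($T,U$ with $n$ leaves, $g\in G_n$) under the equivalence generated by $(T,g,U)\sim(T_{\rho_n(g)(k)},(g)\kappa_k^n,U_k)$, product $[T,g,U][U,h,W]=[T,gh,W]$. The elements $[T,1,U]$ form the subgroup $F_d$. Diverse: some $n_0$ has $\bigcap_{k=1}^n\mathrm{Im}\,\kappa_k^n=\{1\}$ for all $n\ge n_0$. *)

theory Defs
  imports "HOL-Algebra.Sym_Groups"
begin

datatype tree = Lf | Nd "tree list"

fun dary :: "nat \<Rightarrow> tree \<Rightarrow> bool" where
  "dary d Lf = True"
| "dary d (Nd ts) = (length ts = d \<and> (\<forall>t\<in>set ts. dary d t))"

fun nleaves :: "tree \<Rightarrow> nat" where
  "nleaves Lf = 1"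
| "nleaves (Nd ts) = sum_list (map nleaves ts)"

text \<open>caret d k T = T_k : attach a d-ary caret to the k-th leaf (leaves numbered from 1).\<close>
fun caret :: "nat \<Rightarrow> nat \<Rightarrow> tree \<Rightarrow> tree"
and caretl :: "nat \<Rightarrow> nat \<Rightarrow> tree list \<Rightarrow> tree list" where
  "caret d k Lf = (if k = 1 then Nd (replicate d Lf) else Lf)"
| "caret d k (Nd ts) = Nd (caretl d k ts)"
| "caretl d k [] = []"
| "caretl d k (t # ts) =
     (if k \<le> nleaves t then caret d k t # ts else t # caretl d (k - nleaves t) ts)"

text \<open>Smallest element of the block B^(k)_m of the partition of {1..n+d-1}.\<close>
definition blk_start :: "nat \<Rightarrow> nat \<Rightarrow> nat \<Rightarrow> nat" where
  "blk_start d k m = (if m < k then m else if m = k then k else m + d - 1)"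

definition clone_perm :: "nat \<Rightarrow> nat \<Rightarrow> nat \<Rightarrow> (nat \<Rightarrow> nat) \<Rightarrow> nat \<Rightarrow> nat" where
  "clone_perm d n k \<sigma> i =
     (if 1 \<le> i \<and> i \<le> n + d - 1 then
        (if i < k then blk_start d (\<sigma> k) (\<sigma> i)
         else if i \<le> k + d - 1 then blk_start d (\<sigma> k) (\<sigma> k) + (i - k)
         else blk_start d (\<sigma> k) (\<sigma> (i - (d - 1))))
      else i)"

definition cloning_system ::
  "nat \<Rightarrow> (nat \<Rightarrow> 'g monoid) \<Rightarrow> (nat \<Rightarrow> 'g \<Rightarrow> nat \<Rightarrow> nat) \<Rightarrow> (nat \<Rightarrow> nat \<Rightarrow> 'g \<Rightarrow> 'g) \<Rightarrow> bool"
where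
  "cloning_system d G \<rho> \<kappa> \<longleftrightarrow>
     (\<forall>n\<ge>1. group (G n)) \<and>
     (\<forall>n\<ge>1. \<rho> n \<in> hom (G n) (sym_group n)) \<and>
     (\<forall>n\<ge>1. \<forall>k\<in>{1..n}. \<kappa> n k ` carrier (G n) \<subseteq> carrier (G (n + d - 1))
                        \<and> inj_on (\<kappa> n k) (carrier (G n))) \<and>
     \<comment> \<open>(C1)\<close>
     (\<forall>n\<ge>1. \<forall>k\<in>{1..n}. \<forall>g\<in>carrier (G n). \<forall>h\<in>carrier (G n).
        \<kappa> n k (g \<otimes>\<^bsub>G n\<^esub> h) = \<kappa> n (\<rho> n h k) g \<otimes>\<^bsub>G (n + d - 1)\<^esub> \<kappa> n k h) \<and>
     \<comment> \<open>(C2)\<close>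
     (\<forall>n\<ge>1. \<forall>k l. 1 \<le> k \<and> k < l \<and> l \<le> n \<longrightarrow> (\<forall>g\<in>carrier (G n).
        \<kappa> (n + d - 1) k (\<kappa> n l g) = \<kappa> (n + d - 1) (l + d - 1) (\<kappa> n k g))) \<and>
     \<comment> \<open>(C3)\<close>
     (\<forall>n\<ge>1. \<forall>k\<in>{1..n}. \<forall>g\<in>carrier (G n). \<forall>i\<in>{1..n + d - 1}. i \<notin> {k..k + d - 1} \<longrightarrow>
        \<rho> (n + d - 1) (\<kappa> n k g) i = clone_perm d n k (\<rho> n g) i)"

definition diverse :: "nat \<Rightarrow> (nat \<Rightarrow> 'g monoid) \<Rightarrow> (nat \<Rightarrow> nat \<Rightarrow> 'g \<Rightarrow> 'g) \<Rightarrow> bool" where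
  "diverse d G \<kappa> \<longleftrightarrow>
     (\<exists>n0. \<forall>n\<ge>n0. n \<ge> 1 \<longrightarrow>
        (\<Inter>k\<in>{1..n}. \<kappa> n k ` carrier (G n)) = {\<one>\<^bsub>G (n + d - 1)\<^esub>})"

type_synonym 'g triple = "tree \<times> 'g \<times> tree"

definition triples :: "nat \<Rightarrow> (nat \<Rightarrow> 'g monoid) \<Rightarrow> 'g triple set" where
  "triples d G = {(T, g, U). dary d T \<and> dary d U \<and> nleaves T = nleaves U
                            \<and> g \<in> carrier (G (nleaves T))}"

definition expansion ::
  "nat \<Rightarrow> (nat \<Rightarrow> 'g monoid) \<Rightarrow> (nat \<Rightarrow> 'g \<Rightarrow> nat \<Rightarrow> nat) \<Rightarrow> (nat \<Rightarrow> nat \<Rightarrow> 'g \<Rightarrow> 'g)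
   \<Rightarrow> ('g triple \<times> 'g triple) set" where
  "expansion d G \<rho> \<kappa> = {((T, g, U), (caret d (\<rho> (nleaves T) g k) T, \<kappa> (nleaves T) k g, caret d k U))
       | T g U k. (T, g, U) \<in> triples d G \<and> 1 \<le> k \<and> k \<le> nleaves T}"

definition triple_equiv ::
  "nat \<Rightarrow> (nat \<Rightarrow> 'g monoid) \<Rightarrow> (nat \<Rightarrow> 'g \<Rightarrow> nat \<Rightarrow> nat) \<Rightarrow> (nat \<Rightarrow> nat \<Rightarrow> 'g \<Rightarrow> 'g)
   \<Rightarrow> ('g triple \<times> 'g triple) set" where
  "triple_equiv d G \<rho> \<kappa> =
     (expansion d G \<rho> \<kappa> \<union> (expansion d G \<rho> \<kappa>)\<inverse>)\<^sup>* \<inter> (triples d G \<times> triples d G)"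

definition tclass where
  "tclass d G \<rho> \<kappa> x = triple_equiv d G \<rho> \<kappa> `` {x}"

definition Td_carrier where
  "Td_carrier d G \<rho> \<kappa> = tclass d G \<rho> \<kappa> ` triples d G"

definition Td_mult where
  "Td_mult d G \<rho> \<kappa> X Y =
     \<Union>{tclass d G \<rho> \<kappa> (T, g \<otimes>\<^bsub>G (nleaves T)\<^esub> h, W) | T g U h W.
          (T, g, U) \<in> X \<and> (U, h, W) \<in> Y}"

definition Td_inv where
  "Td_inv d G \<rho> \<kappa> X =
     \<Union>{tclass d G \<rho> \<kappa> (U, inv\<^bsub>G (nleaves T)\<^esub> g, T) | T g U. (T, g, U) \<in> X}"

definition Fd where
  "Fd d G \<rho> \<kappa> = {tclass d G \<rho> \<kappa> (T, \<one>\<^bsub>G (nleaves T)\<^esub>, U) | T U.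
                      dary d T \<and> dary d U \<and> nleaves T = nleaves U}"

definition Td_normalizer where
  "Td_normalizer d G \<rho> \<kappa> H =
     {x \<in> Td_carrier d G \<rho> \<kappa>.
        {Td_mult d G \<rho> \<kappa> (Td_inv d G \<rho> \<kappa> x) (Td_mult d G \<rho> \<kappa> f x) | f. f \<in> H} = H}"

end

theory Submission
  imports Defs
begin

text \<open>
  A triple \<open>(T, 1, U)\<close> acts on infinite words over \<open>{0..<d}\<close> by replacing the address
  of the \<open>i\<close>-th leaf of \<open>T\<close> by that of the \<open>i\<close>-th leaf of \<open>U\<close>. This relation is unchanged
  by expansions, and since \<open>\<kappa>\<close> is injective with \<open>\<kappa>(1) = 1\<close>, expansions never change
  whether the group label is \<open>1\<close>. Hence an element of \<open>F\<^sub>d\<close> is exactly the set of triples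
  with label \<open>1\<close> and a prescribed relation; products and inverses in \<open>F\<^sub>d\<close> become
  composition and converse of relations, so \<open>F\<^sub>d\<close> is closed under conjugation by its elements.

  Conversely, let \<open>x = [T, g, U]\<close> normalise \<open>F\<^sub>d\<close>, where \<open>T\<close> has \<open>n \<ge> n\<^sub>0\<close> leaves, and
  let \<open>c = \<rho>(g)(1)\<close>. For every leaf \<open>a\<close>, the conjugate \<open>x\<inverse> [T\<^sub>a, 1, T\<^sub>c] x\<close> contains a triple
  with label \<open>\<kappa>\<^sub>a(g\<inverse>) \<kappa>\<^sub>1(g)\<close>; lying in \<open>F\<^sub>d\<close>, this label is \<open>1\<close>. So \<open>\<kappa>\<^sub>1(g)\<inverse>\<close> lies in
  the image of every \<open>\<kappa>\<^sub>a\<close>, hence is \<open>1\<close> by diversity, and \<open>g = 1\<close> by injectivity.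
\<close>

lemma nleaves_caret:
  "\<lbrakk>1 \<le> k; k \<le> nleaves T; d \<ge> 1\<rbrakk> \<Longrightarrow> nleaves (caret d k T) = nleaves T + d - 1"
  "\<lbrakk>1 \<le> k; k \<le> sum_list (map nleaves ts); d \<ge> 1\<rbrakk> \<Longrightarrow>
     sum_list (map nleaves (caretl d k ts)) = sum_list (map nleaves ts) + d - 1"
  by (induction d k T and d k ts rule: caret_caretl.induct) (auto simp: sum_list_replicate)

lemma dary_caret:
  "dary d T \<Longrightarrow> dary d (caret d k T)"
  "\<forall>t\<in>set ts. dary d t \<Longrightarrow> length (caretl d k ts) = length ts \<and> (\<forall>t\<in>set (caretl d k ts). dary d t)"
  by (induction d k T and d k ts rule: caret_caretl.induct) auto

lemma nleaves_pos: "\<lbrakk>dary d T; d \<ge> 1\<rbrakk> \<Longrightarrow> nleaves T \<ge> 1"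
proof (induction T)
  case (Nd ts)
  then obtain t where t: "t \<in> set ts" by (cases ts) auto
  then have "nleaves t \<le> sum_list (map nleaves ts)" by (simp add: member_le_sum_list)
  with t Nd show ?case by fastforce
qed simp

fun full :: "nat \<Rightarrow> nat \<Rightarrow> tree" where
  "full d 0 = Lf"
| "full d (Suc h) = Nd (replicate d (full d h))"

lemma nleaves_full: "nleaves (full d h) = d ^ h"
  by (induction h) (auto simp: sum_list_replicate)

lemma size_child_less: "t \<in> set ts \<Longrightarrow> size t < size (Nd ts)"
  by (induction ts) auto

fun leaf_addrs :: "tree \<Rightarrow> nat list list"
and leaf_addrs_from :: "nat \<Rightarrow> tree list \<Rightarrow> nat list list" where
  "leaf_addrs Lf = [[]]"
| "leaf_addrs (Nd ts) = leaf_addrs_from 0 ts"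
| "leaf_addrs_from j [] = []"
| "leaf_addrs_from j (t # ts) = map (Cons j) (leaf_addrs t) @ leaf_addrs_from (Suc j) ts"

lemma length_leaf_addrs:
  "length (leaf_addrs T) = nleaves T"
  "length (leaf_addrs_from j ts) = sum_list (map nleaves ts)"
  by (induction T and j ts rule: leaf_addrs_leaf_addrs_from.induct) auto

lemma leaf_addrs_from_replicate_Lf: "leaf_addrs_from j (replicate m Lf) = map (\<lambda>i. [i]) [j..<j+m]"
  by (induction m arbitrary: j) (auto simp: upt_rec)

lemma leaf_addrs_caret:
  "\<lbrakk>1 \<le> k; k \<le> nleaves T\<rbrakk> \<Longrightarrow> leaf_addrs (caret d k T) =
     take (k-1) (leaf_addrs T) @ map (\<lambda>i. leaf_addrs T ! (k-1) @ [i]) [0..<d] @ drop k (leaf_addrs T)"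
  "\<lbrakk>1 \<le> k; k \<le> sum_list (map nleaves ts)\<rbrakk> \<Longrightarrow> leaf_addrs_from j (caretl d k ts) =
     take (k-1) (leaf_addrs_from j ts) @ map (\<lambda>i. leaf_addrs_from j ts ! (k-1) @ [i]) [0..<d]
       @ drop k (leaf_addrs_from j ts)"
proof (induction d k T and d k ts arbitrary: and j rule: caret_caretl.induct)
  case (4 d k t ts)
  show ?case
  proof (cases "k \<le> nleaves t")
    case True
    then have "k - 1 < nleaves t" using 4 by simp
    with True show ?thesis using 4 by (simp add: length_leaf_addrs take_map drop_map nth_append)
  next
    case False
    then have "1 \<le> k - nleaves t" "k - nleaves t \<le> sum_list (map nleaves ts)"
      "\<not> k - Suc 0 < nleaves t" "k - Suc 0 - nleaves t = k - Suc (nleaves t)" using 4 by auto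
    with False show ?thesis using "4.IH"(2)[of "Suc j"] by (simp add: length_leaf_addrs nth_append)
  qed
qed (simp_all add: leaf_addrs_from_replicate_Lf)

lemma set_leaf_addrs_from:
  "set (leaf_addrs_from j ts) = {(j + i) # a | i a. i < length ts \<and> a \<in> set (leaf_addrs (ts ! i))}"
proof (induction ts arbitrary: j)
  case (Cons t ts)
  have "set (leaf_addrs_from j (t # ts)) = (Cons j) ` set (leaf_addrs t) \<union> set (leaf_addrs_from (Suc j) ts)"
    by simp
  also have "\<dots> = {(j + i) # a | i a. i < length (t # ts) \<and> a \<in> set (leaf_addrs ((t # ts) ! i))}"
    unfolding Cons.IH by (auto simp: less_Suc_eq_0_disj)
  finally show ?case .
qed simp

lemma leaf_addrs_digits: "\<lbrakk>dary d T; a \<in> set (leaf_addrs T)\<rbrakk> \<Longrightarrow> set a \<subseteq> {..<d}"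
proof (induction T arbitrary: a)
  case (Nd ts)
  then obtain i a' where "a = i # a'" "i < length ts" "a' \<in> set (leaf_addrs (ts ! i))"
    by (auto simp: set_leaf_addrs_from)
  with Nd show ?case by (metis dary.simps(2) insert_subset lessThan_iff list.set(2) nth_mem)
qed simp

lemma leaf_addrs_prefix_free:
  "\<lbrakk>a \<in> set (leaf_addrs T); a @ p \<in> set (leaf_addrs T)\<rbrakk> \<Longrightarrow> p = []"
proof (induction T arbitrary: a)
  case (Nd ts)
  then obtain i a' where "a = i # a'" "i < length ts" "a' \<in> set (leaf_addrs (ts ! i))"
    "a' @ p \<in> set (leaf_addrs (ts ! i))"
    by (auto simp: set_leaf_addrs_from)
  with Nd.IH[OF nth_mem] show ?case by simp
qed simp

lemma distinct_leaf_addrs: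
  "distinct (leaf_addrs T)"
  "distinct (leaf_addrs_from j ts)"
  by (induction T and j ts rule: leaf_addrs_leaf_addrs_from.induct)
    (auto simp: distinct_map set_leaf_addrs_from)

lemma leaf_addrs_inject:
  "\<lbrakk>dary d T; dary d T'; set (leaf_addrs T) = set (leaf_addrs T')\<rbrakk> \<Longrightarrow> T = T'"
proof (induction T arbitrary: T')
  case Lf
  then show ?case by (cases T') (auto simp: set_leaf_addrs_from)
next
  case (Nd ts)
  then obtain ss where T': "T' = Nd ss"
    by (cases T') (auto simp: set_leaf_addrs_from)
  have child: "set (leaf_addrs (us ! i)) = {a. i # a \<in> set (leaf_addrs (Nd us))}"
    if "i < length us" for us i
    using that by (auto simp: set_leaf_addrs_from)
  have "ts = ss"
  proof (rule nth_equalityI)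
    show "length ts = length ss" using Nd.prems T' by simp
    fix i assume "i < length ts"
    with Nd.prems T' show "ts ! i = ss ! i"
      using Nd.IH[of "ts ! i" "ss ! i"] child[of i ts] child[of i ss] by simp
  qed
  then show ?case using T' by simp
qed

section \<open>Infinite words and the relation of a tree pair\<close>

definition words :: "nat \<Rightarrow> (nat \<Rightarrow> nat) set" where
  "words d = {w. \<forall>n. w n < d}"

definition prepend :: "nat list \<Rightarrow> (nat \<Rightarrow> nat) \<Rightarrow> nat \<Rightarrow> nat" where
  "prepend xs w n = (if n < length xs then xs ! n else w (n - length xs))"

lemma prepend_Nil [simp]: "prepend [] w = w"
  by (simp add: prepend_def fun_eq_iff)

lemma prepend_append: "prepend (xs @ ys) w = prepend xs (prepend ys w)"
  by (auto simp: prepend_def nth_append fun_eq_iff)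

lemma prepend_in_words: "\<lbrakk>set xs \<subseteq> {..<d}; w \<in> words d\<rbrakk> \<Longrightarrow> prepend xs w \<in> words d"
  by (auto simp: prepend_def words_def subset_iff)

lemma inj_prepend: "inj (prepend xs)"
proof
  fix w w' assume "prepend xs w = prepend xs w'"
  then have "prepend xs w (n + length xs) = prepend xs w' (n + length xs)" for n
    by simp
  then show "w = w'" by (simp add: prepend_def fun_eq_iff)
qed

lemma prepend_eq_prependD:
  assumes "prepend xs w = prepend ys w'" "length xs \<le> length ys"
  shows "ys = xs @ drop (length xs) ys" "w = prepend (drop (length xs) ys) w'"
proof -
  have "take (length xs) ys = xs"
  proof (rule nth_equalityI)
    fix n assume "n < length (take (length xs) ys)"
    then show "take (length xs) ys ! n = xs ! n"
      using fun_cong[OF assms(1), of n] assms(2) by (simp add: prepend_def)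
  qed (use assms in simp)
  then show ys: "ys = xs @ drop (length xs) ys" by (metis append_take_drop_id)
  have "prepend xs w = prepend xs (prepend (drop (length xs) ys) w')"
    using assms(1) ys by (metis prepend_append)
  then show "w = prepend (drop (length xs) ys) w'" using inj_prepend by (metis injD)
qed

lemma prepend_eq_on_words_imp_eq:
  assumes "d \<ge> 2" and eq: "\<And>w. w \<in> words d \<Longrightarrow> prepend xs w = prepend ys w"
  shows "xs = ys"
proof -
  have "xs = ys" if "length xs \<le> length ys" "\<And>w. w \<in> words d \<Longrightarrow> prepend xs w = prepend ys w"
    for xs ys
  proof (cases "drop (length xs) ys")
    case Nil
    have "(\<lambda>_. 0) \<in> words d" using \<open>d \<ge> 2\<close> by (simp add: words_def)
    with Nil show ?thesis using prepend_eq_prependD(1)[OF that(2) that(1)] by simp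
  next
    case (Cons c p)
    \<comment> \<open>a constant word whose digit differs from \<open>c\<close> does not begin with \<open>c\<close>\<close>
    define w where "w = (\<lambda>_::nat. if c = 0 then 1 else 0 :: nat)"
    have "w \<in> words d" using \<open>d \<ge> 2\<close> by (simp add: words_def w_def)
    then have "w = prepend (c # p) w"
      using prepend_eq_prependD(2)[OF that(2) that(1)] Cons by simp
    then have "w 0 = prepend (c # p) w 0" by (rule fun_cong)
    then have "w 0 = c" by (simp add: prepend_def)
    then show ?thesis by (simp add: w_def split: if_splits)
  qed
  from this[of xs ys] this[of ys xs] eq show ?thesis by (metis nat_le_linear)
qed

lemma prepend_head_tail: "prepend [w 0] (\<lambda>n. w (Suc n)) = w"
  by (simp add: prepend_def fun_eq_iff)

lemma leaf_addrs_cover: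
  "\<lbrakk>dary d T; w \<in> words d\<rbrakk> \<Longrightarrow> \<exists>a\<in>set (leaf_addrs T). \<exists>w'\<in>words d. w = prepend a w'"
proof (induction T arbitrary: w)
  case Lf
  then show ?case by force
next
  case (Nd ts)
  let ?w = "\<lambda>n. w (Suc n)"
  have w: "?w \<in> words d" "w 0 < length ts" using Nd.prems by (auto simp: words_def)
  then have child: "ts ! w 0 \<in> set ts" "dary d (ts ! w 0)" using Nd.prems(1) by auto
  obtain a w' where "a \<in> set (leaf_addrs (ts ! w 0))" "w' \<in> words d" "?w = prepend a w'"
    using Nd.IH[OF child w(1)] by blast
  moreover have "w 0 # a \<in> set (leaf_addrs (Nd ts))"
    using calculation(1) w(2) by (auto simp: set_leaf_addrs_from)
  ultimately show ?case
    using prepend_head_tail[of w] prepend_append[of "[w 0]" a w'] by (metis append_Cons append_Nil)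
qed

lemma leaf_addrs_prepend_eq:
  assumes "a \<in> set (leaf_addrs T)" "a' \<in> set (leaf_addrs T)" "prepend a w = prepend a' w'"
  shows "a = a'" "w = w'"
proof -
  have "a = a'" if eq: "prepend a w = prepend a' w'" and le: "length a \<le> length a'"
    and leaves: "a \<in> set (leaf_addrs T)" "a' \<in> set (leaf_addrs T)" for a a' w w'
  proof -
    obtain p where "a' = a @ p" using prepend_eq_prependD(1)[OF eq le] by blast
    with leaf_addrs_prefix_free[of a T p] leaves show ?thesis by simp
  qed
  from this[of a w a' w'] this[of a' w' a w] assms show "a = a'" by (metis nat_le_linear)
  then show "w = w'" using assms(3) inj_prepend by (metis injD)
qed

lemma Union_eq_constI: "\<lbrakk>S \<noteq> {}; \<And>X. X \<in> S \<Longrightarrow> X = c\<rbrakk> \<Longrightarrow> \<Union>S = c"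
  by blast

lemma Id_on_relcomp_Id_on: "s \<subseteq> A \<times> A \<Longrightarrow> Id_on A O s O Id_on A = s"
  by blast

definition prefix_rel ::
  "nat \<Rightarrow> (nat list \<times> nat list) set \<Rightarrow> ((nat \<Rightarrow> nat) \<times> (nat \<Rightarrow> nat)) set" where
  "prefix_rel d P = {(prepend a w, prepend b w) | a b w. (a, b) \<in> P \<and> w \<in> words d}"

definition tree_pair_rel :: "nat \<Rightarrow> tree \<Rightarrow> tree \<Rightarrow> ((nat \<Rightarrow> nat) \<times> (nat \<Rightarrow> nat)) set" where
  "tree_pair_rel d T U = prefix_rel d (set (zip (leaf_addrs T) (leaf_addrs U)))"

lemma prefix_rel_Un: "prefix_rel d (P \<union> Q) = prefix_rel d P \<union> prefix_rel d Q"
  unfolding prefix_rel_def by blast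

lemma prefix_rel_split:
  "prefix_rel d {(a @ [i], b @ [i]) | i. i < d} = prefix_rel d {(a, b)}"
proof (intro equalityI subsetI)
  fix x assume "x \<in> prefix_rel d {(a @ [i], b @ [i]) | i. i < d}"
  then obtain i w where "i < d" "w \<in> words d" "x = (prepend (a @ [i]) w, prepend (b @ [i]) w)"
    unfolding prefix_rel_def by blast
  moreover from this have "prepend [i] w \<in> words d" by (intro prepend_in_words) auto
  ultimately show "x \<in> prefix_rel d {(a, b)}"
    unfolding prefix_rel_def by (auto simp: prepend_append)
next
  fix x assume "x \<in> prefix_rel d {(a, b)}"
  then obtain w where w: "w \<in> words d" "x = (prepend a w, prepend b w)"
    unfolding prefix_rel_def by blast
  then have "x = (prepend (a @ [w 0]) (\<lambda>n. w (Suc n)), prepend (b @ [w 0]) (\<lambda>n. w (Suc n)))"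
    by (simp add: prepend_append prepend_head_tail)
  moreover have "w 0 < d" "(\<lambda>n. w (Suc n)) \<in> words d" using w(1) by (auto simp: words_def)
  ultimately show "x \<in> prefix_rel d {(a @ [i], b @ [i]) | i. i < d}"
    unfolding prefix_rel_def by blast
qed

lemma tree_pair_rel_caret:
  assumes "1 \<le> k" "k \<le> nleaves T" "nleaves T = nleaves U"
  shows "tree_pair_rel d (caret d k T) (caret d k U) = tree_pair_rel d T U"
proof -
  define L M where "L = leaf_addrs T" and "M = leaf_addrs U"
  define Z where "Z = zip L M"
  obtain j where k: "k = Suc j" using assms(1) by (cases k) auto
  have len: "length L = nleaves T" "length M = nleaves T"
    using assms by (simp_all add: L_def M_def length_leaf_addrs)
  have j: "j < length Z" "Z ! j = (L ! j, M ! j)" using assms k len by (simp_all add: Z_def)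
  have "zip (leaf_addrs (caret d k T)) (leaf_addrs (caret d k U)) =
      take j Z @ map (\<lambda>i. (L ! j @ [i], M ! j @ [i])) [0..<d] @ drop k Z"
    using leaf_addrs_caret(1)[of k T d] leaf_addrs_caret(1)[of k U d] assms k len
    by (simp add: L_def M_def Z_def zip_map_map zip_same_conv_map comp_def take_zip drop_zip)
  then have new: "set (zip (leaf_addrs (caret d k T)) (leaf_addrs (caret d k U))) =
      set (take j Z) \<union> {(L ! j @ [i], M ! j @ [i]) | i. i < d} \<union> set (drop k Z)"
    by auto
  have "Z = take j Z @ Z ! j # drop k Z" using id_take_nth_drop[OF j(1)] k by simp
  then have old: "set Z = set (take j Z) \<union> {(L ! j, M ! j)} \<union> set (drop k Z)"
    by (metis Un_insert_right j(2) insert_is_Un set_append set_simps(2) sup_commute)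
  have "tree_pair_rel d (caret d k T) (caret d k U) = prefix_rel d (set (take j Z))
      \<union> prefix_rel d {(L ! j, M ! j)} \<union> prefix_rel d (set (drop k Z))"
    unfolding tree_pair_rel_def new by (simp add: prefix_rel_Un prefix_rel_split)
  also have "\<dots> = prefix_rel d (set Z)" by (simp only: old prefix_rel_Un)
  also have "\<dots> = tree_pair_rel d T U" by (simp add: tree_pair_rel_def Z_def L_def M_def)
  finally show ?thesis .
qed

lemma tree_pair_rel_conv_nth:
  assumes "nleaves T = nleaves U"
  shows "tree_pair_rel d T U = {(prepend (leaf_addrs T ! i) w, prepend (leaf_addrs U ! i) w) | i w.
    i < nleaves T \<and> w \<in> words d}"
  using assms unfolding tree_pair_rel_def prefix_rel_def set_zip by (auto simp: length_leaf_addrs)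

lemma converse_tree_pair_rel:
  "nleaves T = nleaves U \<Longrightarrow> (tree_pair_rel d T U)\<inverse> = tree_pair_rel d U T"
  by (auto simp: tree_pair_rel_conv_nth)

lemma tree_pair_rel_subset:
  "\<lbrakk>dary d T; dary d U\<rbrakk> \<Longrightarrow> tree_pair_rel d T U \<subseteq> words d \<times> words d"
  unfolding tree_pair_rel_def prefix_rel_def
  by (auto intro!: prepend_in_words dest: set_zip_leftD set_zip_rightD leaf_addrs_digits)

lemma tree_pair_rel_diag: "dary d T \<Longrightarrow> tree_pair_rel d T T = Id_on (words d)"
  unfolding tree_pair_rel_def prefix_rel_def zip_same
  by (auto intro!: prepend_in_words dest: leaf_addrs_digits) (blast dest: leaf_addrs_cover)

lemma leaf_addrs_prepend_eq_nth:
  assumes "prepend (leaf_addrs T ! i) w = prepend (leaf_addrs T ! j) w'"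
    "i < nleaves T" "j < nleaves T"
  shows "i = j" "w = w'"
proof -
  have mem: "leaf_addrs T ! i \<in> set (leaf_addrs T)" "leaf_addrs T ! j \<in> set (leaf_addrs T)"
    using assms(2,3) by (simp_all add: length_leaf_addrs)
  show "i = j"
    using leaf_addrs_prepend_eq(1)[OF mem assms(1)] assms(2,3)
    by (simp add: nth_eq_iff_index_eq distinct_leaf_addrs length_leaf_addrs)
  show "w = w'" using leaf_addrs_prepend_eq(2)[OF mem assms(1)] .
qed

lemma relcomp_tree_pair_rel:
  assumes "nleaves T = nleaves U" "nleaves U = nleaves W"
  shows "tree_pair_rel d T U O tree_pair_rel d U W = tree_pair_rel d T W"
proof (intro equalityI subsetI)
  fix x assume "x \<in> tree_pair_rel d T U O tree_pair_rel d U W"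
  then obtain i j w w' where ij: "i < nleaves U" "j < nleaves U" "w \<in> words d"
    "prepend (leaf_addrs U ! i) w = prepend (leaf_addrs U ! j) w'"
    "x = (prepend (leaf_addrs T ! i) w, prepend (leaf_addrs W ! j) w')"
    using assms by (auto simp: tree_pair_rel_conv_nth)
  with leaf_addrs_prepend_eq_nth[OF ij(4) ij(1,2)] show "x \<in> tree_pair_rel d T W"
    using assms by (auto simp: tree_pair_rel_conv_nth)
next
  fix x assume "x \<in> tree_pair_rel d T W"
  then show "x \<in> tree_pair_rel d T U O tree_pair_rel d U W"
    using assms by (fastforce simp: tree_pair_rel_conv_nth)
qed

lemma tree_pair_rel_inject:
  assumes "d \<ge> 2" "dary d B" "dary d C" "nleaves B = nleaves V" "nleaves C = nleaves V"
    and eq: "tree_pair_rel d B V = tree_pair_rel d C V"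
  shows "B = C"
proof -
  have "leaf_addrs B ! i = leaf_addrs C ! i" if i: "i < nleaves V" for i
  proof (rule prepend_eq_on_words_imp_eq[OF \<open>d \<ge> 2\<close>])
    fix w assume "w \<in> words d"
    with i have "(prepend (leaf_addrs B ! i) w, prepend (leaf_addrs V ! i) w) \<in> tree_pair_rel d C V"
      using eq assms(4) by (auto simp: tree_pair_rel_conv_nth)
    then obtain j w' where j: "j < nleaves V"
      "prepend (leaf_addrs B ! i) w = prepend (leaf_addrs C ! j) w'"
      "prepend (leaf_addrs V ! i) w = prepend (leaf_addrs V ! j) w'"
      using assms(5) by (auto simp: tree_pair_rel_conv_nth)
    with leaf_addrs_prepend_eq_nth[OF j(3) i j(1)]
    show "prepend (leaf_addrs B ! i) w = prepend (leaf_addrs C ! i) w" by simp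
  qed
  then have "leaf_addrs B = leaf_addrs C"
    using assms(4,5) by (intro nth_equalityI) (simp_all add: length_leaf_addrs)
  then show ?thesis using leaf_addrs_inject assms(2,3) by metis
qed

definition expands :: "nat \<Rightarrow> tree \<Rightarrow> tree \<Rightarrow> bool" where
  "expands d = (\<lambda>T V. \<exists>k. 1 \<le> k \<and> k \<le> nleaves T \<and> V = caret d k T)\<^sup>*\<^sup>*"

lemma expands_caret: "\<lbrakk>1 \<le> k; k \<le> nleaves T\<rbrakk> \<Longrightarrow> expands d T (caret d k T)"
  unfolding expands_def by (rule r_into_rtranclp) blast

lemma caretl_append:
  "\<lbrakk>1 \<le> k; k \<le> nleaves t\<rbrakk> \<Longrightarrow>
    caretl d (sum_list (map nleaves pre) + k) (pre @ t # post) = pre @ caret d k t # post"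
  by (induction pre) auto

lemma expands_Nd_child:
  "expands d t t' \<Longrightarrow> expands d (Nd (pre @ t # post)) (Nd (pre @ t' # post))"
  unfolding expands_def
proof (induction rule: rtranclp_induct)
  case (step u v)
  then obtain k where k: "1 \<le> k" "k \<le> nleaves u" "v = caret d k u" by blast
  then have "Nd (pre @ v # post) = caret d (sum_list (map nleaves pre) + k) (Nd (pre @ u # post))"
    by (simp add: caretl_append)
  moreover have "1 \<le> sum_list (map nleaves pre) + k"
    "sum_list (map nleaves pre) + k \<le> nleaves (Nd (pre @ u # post))" using k by auto
  ultimately show ?case using step.IH by (metis (mono_tags, lifting) rtranclp.rtrancl_into_rtrancl)
qed simp

lemma expands_Nd: "list_all2 (expands d) ts ts' \<Longrightarrow> expands d (Nd ts) (Nd ts')"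
proof -
  have "expands d (Nd (pre @ ts)) (Nd (pre @ ts'))" if "list_all2 (expands d) ts ts'" for pre
    using that
  proof (induction ts ts' arbitrary: pre rule: list_all2_induct)
    case (Cons t ts t' ts')
    have "expands d (Nd (pre @ t # ts)) (Nd (pre @ t' # ts))"
      using Cons(1) by (rule expands_Nd_child)
    moreover have "expands d (Nd ((pre @ [t']) @ ts)) (Nd ((pre @ [t']) @ ts'))" by (rule Cons.IH)
    ultimately show ?case unfolding expands_def by simp
  qed (simp add: expands_def)
  from this[of "[]"] show "list_all2 (expands d) ts ts' \<Longrightarrow> ?thesis" by simp
qed

text \<open>Here \<open>size\<close> serves only as a crude bound on the height.\<close>

lemma expands_full: "\<lbrakk>dary d T; d \<ge> 1; size T \<le> h\<rbrakk> \<Longrightarrow> expands d T (full d h)"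
proof (induction h arbitrary: T)
  case 0
  then show ?case by (cases T) (simp_all add: expands_def)
next
  case (Suc h)
  have children: "expands d (Nd ts) (full d (Suc h))"
    if "length ts = d" "\<forall>t\<in>set ts. dary d t \<and> size t \<le> h" for ts
    using that Suc.IH Suc.prems(2) by (auto simp: list_all2_conv_all_nth intro!: expands_Nd)
  show ?case
  proof (cases T)
    case Lf
    have "expands d Lf (Nd (replicate d Lf))" using expands_caret[of 1 Lf d] by simp
    moreover have "expands d (Nd (replicate d Lf)) (full d (Suc h))" by (rule children) auto
    ultimately show ?thesis unfolding Lf expands_def by simp
  next
    case (Nd ts)
    have "size t \<le> h" if "t \<in> set ts" for t
      using size_child_less[OF that] Suc.prems(3) Nd by simp
    then show ?thesis using Suc.prems(1) Nd children[of ts] by simp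
  qed
qed

section \<open>The classes of \<open>F\<^sub>d\<close>\<close>

locale dary_cloning_system =
  fixes d :: nat and G :: "nat \<Rightarrow> 'g monoid" and \<rho> :: "nat \<Rightarrow> 'g \<Rightarrow> nat \<Rightarrow> nat"
    and \<kappa> :: "nat \<Rightarrow> nat \<Rightarrow> 'g \<Rightarrow> 'g"
  assumes two_le_d: "d \<ge> 2" and cloning: "cloning_system d G \<rho> \<kappa>"
begin

abbreviation "trip \<equiv> triples d G"
abbreviation "expn \<equiv> expansion d G \<rho> \<kappa>"
abbreviation "eqv \<equiv> triple_equiv d G \<rho> \<kappa>"
abbreviation "cls \<equiv> tclass d G \<rho> \<kappa>"

lemma
  assumes n: "n \<ge> 1"
  shows group_G: "group (G n)"
    and rho_hom: "\<rho> n \<in> hom (G n) (sym_group n)"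
    and kappa_closed: "\<lbrakk>k \<in> {1..n}; g \<in> carrier (G n)\<rbrakk> \<Longrightarrow> \<kappa> n k g \<in> carrier (G (n + d - 1))"
    and inj_on_kappa: "k \<in> {1..n} \<Longrightarrow> inj_on (\<kappa> n k) (carrier (G n))"
    and kappa_mult: "\<lbrakk>k \<in> {1..n}; g \<in> carrier (G n); h \<in> carrier (G n)\<rbrakk> \<Longrightarrow>
      \<kappa> n k (g \<otimes>\<^bsub>G n\<^esub> h) = \<kappa> n (\<rho> n h k) g \<otimes>\<^bsub>G (n + d - 1)\<^esub> \<kappa> n k h"
proof -
  note cs = conjunct1 conjunct2[THEN conjunct1] conjunct2[THEN conjunct2, THEN conjunct1]
    conjunct2[THEN conjunct2, THEN conjunct2, THEN conjunct1]
  note cs = cs[OF cloning[unfolded cloning_system_def]]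
  show "group (G n)" using cs(1) n by blast
  show "\<rho> n \<in> hom (G n) (sym_group n)" using cs(2) n by blast
  show "\<lbrakk>k \<in> {1..n}; g \<in> carrier (G n)\<rbrakk> \<Longrightarrow> \<kappa> n k g \<in> carrier (G (n + d - 1))"
    using cs(3) n by blast
  show "k \<in> {1..n} \<Longrightarrow> inj_on (\<kappa> n k) (carrier (G n))" using cs(3) n by blast
  show "\<lbrakk>k \<in> {1..n}; g \<in> carrier (G n); h \<in> carrier (G n)\<rbrakk> \<Longrightarrow>
      \<kappa> n k (g \<otimes>\<^bsub>G n\<^esub> h) = \<kappa> n (\<rho> n h k) g \<otimes>\<^bsub>G (n + d - 1)\<^esub> \<kappa> n k h"
    using cs(4) n by blast
qed

lemma group_G_expanded: "n \<ge> 1 \<Longrightarrow> group (G (n + d - 1))"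
  using group_G two_le_d by simp

lemma one_closed_G: "n \<ge> 1 \<Longrightarrow> \<one>\<^bsub>G n\<^esub> \<in> carrier (G n)"
  using group_G by (rule monoid.one_closed[OF group.is_monoid])

lemma rho_in_range:
  assumes "n \<ge> 1" "g \<in> carrier (G n)" "k \<in> {1..n}"
  shows "\<rho> n g k \<in> {1..n}"
proof -
  have "\<rho> n g permutes {1..n}"
    using hom_in_carrier[OF rho_hom assms(2)] assms(1) by (simp add: sym_group_carrier)
  then show ?thesis using assms(3) by (rule permutes_in_image[THEN iffD2])
qed

lemma rho_one: "n \<ge> 1 \<Longrightarrow> \<rho> n \<one>\<^bsub>G n\<^esub> = id"
  using hom_one[OF rho_hom group_G sym_group_is_group] by (simp add: sym_group_one)

lemma kappa_one:
  assumes n: "n \<ge> 1" and k: "k \<in> {1..n}"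
  shows "\<kappa> n k \<one>\<^bsub>G n\<^esub> = \<one>\<^bsub>G (n + d - 1)\<^esub>"
proof -
  have one: "\<one>\<^bsub>G n\<^esub> \<in> carrier (G n)" using one_closed_G[OF n] .
  have "\<kappa> n k \<one>\<^bsub>G n\<^esub> = \<kappa> n k (\<one>\<^bsub>G n\<^esub> \<otimes>\<^bsub>G n\<^esub> \<one>\<^bsub>G n\<^esub>)"
    using monoid.l_one[OF group.is_monoid[OF group_G[OF n]] one] by simp
  also have "\<dots> = \<kappa> n k \<one>\<^bsub>G n\<^esub> \<otimes>\<^bsub>G (n + d - 1)\<^esub> \<kappa> n k \<one>\<^bsub>G n\<^esub>"
    using kappa_mult[OF n k one one] rho_one[OF n] by simp
  finally have "\<kappa> n k \<one>\<^bsub>G n\<^esub> = \<kappa> n k \<one>\<^bsub>G n\<^esub> \<otimes>\<^bsub>G (n + d - 1)\<^esub> \<kappa> n k \<one>\<^bsub>G n\<^esub>" .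
  with kappa_closed[OF n k one] show ?thesis
    by (metis group.l_cancel_one' group_G_expanded[OF n])
qed

lemma kappa_eq_one_iff:
  "\<lbrakk>n \<ge> 1; k \<in> {1..n}; g \<in> carrier (G n)\<rbrakk> \<Longrightarrow> \<kappa> n k g = \<one>\<^bsub>G (n + d - 1)\<^esub> \<longleftrightarrow> g = \<one>\<^bsub>G n\<^esub>"
  using inj_on_eq_iff[OF inj_on_kappa _ one_closed_G] kappa_one by simp

lemma mem_triples:
  "(T, g, U) \<in> trip \<longleftrightarrow> dary d T \<and> dary d U \<and> nleaves T = nleaves U \<and> g \<in> carrier (G (nleaves T))"
  by (simp add: triples_def)

lemma nleaves_pos_triple: "(T, g, U) \<in> trip \<Longrightarrow> nleaves T \<ge> 1"
  using nleaves_pos[of d T] two_le_d by (simp add: mem_triples)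

lemma expansionI:
  "\<lbrakk>(T, g, U) \<in> trip; k \<in> {1..nleaves T}\<rbrakk> \<Longrightarrow>
    ((T, g, U), (caret d (\<rho> (nleaves T) g k) T, \<kappa> (nleaves T) k g, caret d k U)) \<in> expn"
  unfolding expansion_def by auto

lemma expansionE:
  assumes "(x, y) \<in> expn"
  obtains T g U k where "x = (T, g, U)" "(T, g, U) \<in> trip" "k \<in> {1..nleaves T}"
    "y = (caret d (\<rho> (nleaves T) g k) T, \<kappa> (nleaves T) k g, caret d k U)"
  using assms unfolding expansion_def by auto

lemma expansion_in_triples:
  assumes "(x, y) \<in> expn"
  shows "x \<in> trip" "y \<in> trip"
proof -
  obtain T g U k where e: "x = (T, g, U)" "(T, g, U) \<in> trip" "k \<in> {1..nleaves T}"
    "y = (caret d (\<rho> (nleaves T) g k) T, \<kappa> (nleaves T) k g, caret d k U)"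
    using expansionE[OF assms] by blast
  then show "x \<in> trip" by simp
  have n: "nleaves T \<ge> 1" using nleaves_pos_triple[OF e(2)] .
  have g: "g \<in> carrier (G (nleaves T))" using e(2) unfolding mem_triples by blast
  have "\<rho> (nleaves T) g k \<in> {1..nleaves T}" using rho_in_range[OF n g e(3)] .
  moreover have "\<kappa> (nleaves T) k g \<in> carrier (G (nleaves T + d - 1))"
    using kappa_closed[OF n e(3) g] .
  ultimately show "y \<in> trip"
    using e(2,3) two_le_d unfolding e(4) mem_triples by (simp add: nleaves_caret dary_caret)
qed

lemma triple_equiv_refl: "x \<in> trip \<Longrightarrow> (x, x) \<in> eqv"
  by (simp add: triple_equiv_def)

lemma triple_equiv_sym: "(x, y) \<in> eqv \<Longrightarrow> (y, x) \<in> eqv"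
proof -
  assume xy: "(x, y) \<in> eqv"
  have "(expn \<union> expn\<inverse>)\<inverse> = expn \<union> expn\<inverse>" by auto
  with xy rtrancl_converseI[of x y "expn \<union> expn\<inverse>"] show ?thesis
    by (simp add: triple_equiv_def)
qed

lemma triple_equiv_trans: "\<lbrakk>(x, y) \<in> eqv; (y, z) \<in> eqv\<rbrakk> \<Longrightarrow> (x, z) \<in> eqv"
  unfolding triple_equiv_def by (blast intro: rtrancl_trans)

lemma equiv_triple_equiv: "equiv trip eqv"
proof (rule equivI)
  show "eqv \<subseteq> trip \<times> trip" by (auto simp: triple_equiv_def)
  show "refl_on trip eqv" by (rule refl_onI) (rule triple_equiv_refl)
  show "sym eqv" by (rule symI) (rule triple_equiv_sym)
  show "trans eqv" by (rule transI) (rule triple_equiv_trans)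
qed

lemma expansion_in_triple_equiv: "(x, y) \<in> expn \<Longrightarrow> (x, y) \<in> eqv"
  unfolding triple_equiv_def using expansion_in_triples[of x y] by blast

lemma triple_equiv_expand_right:
  assumes "expands d U V" "(T, g, U) \<in> trip"
  shows "\<exists>T' g'. ((T, g, U), (T', g', V)) \<in> eqv"
  using assms(1) unfolding expands_def
proof (induction rule: rtranclp_induct)
  case base
  then show ?case using triple_equiv_refl[OF assms(2)] by blast
next
  case (step V1 V2)
  from step.IH obtain T' g' where eq1: "((T, g, U), (T', g', V1)) \<in> eqv" by blast
  from step.hyps(2) obtain k where k: "k \<in> {1..nleaves V1}" "V2 = caret d k V1" by auto
  have tr: "(T', g', V1) \<in> trip" using eq1 unfolding triple_equiv_def by blast
  then have "k \<in> {1..nleaves T'}" using k(1) unfolding mem_triples by simp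
  from triple_equiv_trans[OF eq1 expansion_in_triple_equiv[OF expansionI[OF tr this]]]
  show ?case unfolding k(2) by blast
qed

definition unit_triples :: "'g triple set" where
  "unit_triples = {(T, g, U) \<in> trip. g = \<one>\<^bsub>G (nleaves T)\<^esub>}"

definition triple_rel :: "'g triple \<Rightarrow> ((nat \<Rightarrow> nat) \<times> (nat \<Rightarrow> nat)) set" where
  "triple_rel x = (case x of (T, g, U) \<Rightarrow> tree_pair_rel d T U)"

definition fd_class :: "((nat \<Rightarrow> nat) \<times> (nat \<Rightarrow> nat)) set \<Rightarrow> 'g triple set" where
  "fd_class r = {x \<in> unit_triples. triple_rel x = r}"

lemma mem_unit_triples:
  "(T, g, U) \<in> unit_triples \<longleftrightarrow>
     dary d T \<and> dary d U \<and> nleaves T = nleaves U \<and> g = \<one>\<^bsub>G (nleaves T)\<^esub>"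
  using one_closed_G nleaves_pos[of d T] two_le_d by (auto simp: unit_triples_def mem_triples)

lemma expansion_preserves_unit:
  assumes "(x, y) \<in> expn"
  shows "y \<in> unit_triples \<longleftrightarrow> x \<in> unit_triples"
    and "x \<in> unit_triples \<Longrightarrow> triple_rel y = triple_rel x"
proof -
  obtain T g U k where e: "x = (T, g, U)" "(T, g, U) \<in> trip" "k \<in> {1..nleaves T}"
    "y = (caret d (\<rho> (nleaves T) g k) T, \<kappa> (nleaves T) k g, caret d k U)"
    using expansionE[OF assms] by blast
  have n: "nleaves T \<ge> 1" using nleaves_pos_triple[OF e(2)] .
  have g: "g \<in> carrier (G (nleaves T))" using e(2) unfolding mem_triples by blast
  have "\<rho> (nleaves T) g k \<in> {1..nleaves T}" using rho_in_range[OF n g e(3)] .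
  then have "nleaves (caret d (\<rho> (nleaves T) g k) T) = nleaves T + d - 1"
    using two_le_d by (simp add: nleaves_caret)
  then show "y \<in> unit_triples \<longleftrightarrow> x \<in> unit_triples"
    using expansion_in_triples[OF assms] e kappa_eq_one_iff[OF n e(3) g]
    by (simp add: unit_triples_def)
  assume "x \<in> unit_triples"
  then have "g = \<one>\<^bsub>G (nleaves T)\<^esub>" using e(1) by (simp add: unit_triples_def)
  then show "triple_rel y = triple_rel x"
    using e rho_one[OF n] tree_pair_rel_caret[of k T U d]
    by (simp add: triple_rel_def mem_triples)
qed

lemma triple_equiv_preserves_unit:
  assumes "(x, y) \<in> eqv" "x \<in> unit_triples"
  shows "y \<in> unit_triples \<and> triple_rel y = triple_rel x"
proof -
  have "(x, y) \<in> (expn \<union> expn\<inverse>)\<^sup>*" using assms(1) by (simp add: triple_equiv_def)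
  then show ?thesis
  proof (induction rule: rtrancl_induct)
    case (step y z)
    then show ?case using expansion_preserves_unit[of y z] expansion_preserves_unit[of z y] by auto
  qed (use assms(2) in simp)
qed

lemma unit_triple_equiv_full:
  assumes "(T, g, U) \<in> unit_triples" "size U \<le> h"
  obtains T' where "((T, g, U), (T', \<one>\<^bsub>G (nleaves T')\<^esub>, full d h)) \<in> eqv"
    "(T', \<one>\<^bsub>G (nleaves T')\<^esub>, full d h) \<in> fd_class (tree_pair_rel d T U)"
proof -
  have "expands d U (full d h)"
    using assms two_le_d by (intro expands_full) (simp_all add: mem_unit_triples)
  moreover have "(T, g, U) \<in> trip" using assms(1) unfolding unit_triples_def by blast
  ultimately obtain T' g' where eq: "((T, g, U), (T', g', full d h)) \<in> eqv"
    using triple_equiv_expand_right by blast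
  with triple_equiv_preserves_unit[OF eq assms(1)] have "g' = \<one>\<^bsub>G (nleaves T')\<^esub>"
    "(T', g', full d h) \<in> fd_class (tree_pair_rel d T U)"
    by (simp_all add: mem_unit_triples fd_class_def triple_rel_def)
  with eq that show thesis by blast
qed

lemma tclass_unit:
  assumes x: "x \<in> unit_triples"
  shows "cls x = fd_class (triple_rel x)"
proof (intro equalityI subsetI)
  fix y assume "y \<in> cls x"
  then show "y \<in> fd_class (triple_rel x)"
    using triple_equiv_preserves_unit[OF _ x] unfolding tclass_def fd_class_def by blast
next
  fix y assume y: "y \<in> fd_class (triple_rel x)"
  obtain A a B where x_eq: "x = (A, a, B)" by (cases x)
  obtain T t U where y_eq: "y = (T, t, U)" by (cases y)
  define h where "h = max (size B) (size U)"
  have units: "(A, a, B) \<in> unit_triples" "(T, t, U) \<in> unit_triples"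
    using x y x_eq y_eq by (simp_all add: fd_class_def)
  have rel: "tree_pair_rel d T U = tree_pair_rel d A B"
    using y x_eq y_eq by (simp add: fd_class_def triple_rel_def)
  have "size B \<le> h" "size U \<le> h" by (simp_all add: h_def)
  obtain A' where A': "((A, a, B), (A', \<one>\<^bsub>G (nleaves A')\<^esub>, full d h)) \<in> eqv"
    "(A', \<one>\<^bsub>G (nleaves A')\<^esub>, full d h) \<in> fd_class (tree_pair_rel d A B)"
    by (rule unit_triple_equiv_full[OF units(1) \<open>size B \<le> h\<close>])
  obtain T' where T': "((T, t, U), (T', \<one>\<^bsub>G (nleaves T')\<^esub>, full d h)) \<in> eqv"
    "(T', \<one>\<^bsub>G (nleaves T')\<^esub>, full d h) \<in> fd_class (tree_pair_rel d T U)"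
    by (rule unit_triple_equiv_full[OF units(2) \<open>size U \<le> h\<close>])
  have "A' = T'"
  proof (rule tree_pair_rel_inject[OF two_le_d])
    show "dary d A'" "dary d T'" "nleaves A' = nleaves (full d h)" "nleaves T' = nleaves (full d h)"
      using A'(2) T'(2) by (simp_all add: fd_class_def mem_unit_triples)
    show "tree_pair_rel d A' (full d h) = tree_pair_rel d T' (full d h)"
      using A'(2) T'(2) rel by (simp add: fd_class_def triple_rel_def)
  qed
  with A'(1) T'(1) have "(x, y) \<in> eqv"
    unfolding x_eq y_eq by (blast intro: triple_equiv_sym triple_equiv_trans)
  then show "y \<in> cls x" by (simp add: tclass_def)
qed

definition dary_pair_rels :: "((nat \<Rightarrow> nat) \<times> (nat \<Rightarrow> nat)) set set" where
  "dary_pair_rels = {tree_pair_rel d A B | A B. dary d A \<and> dary d B \<and> nleaves A = nleaves B}"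

lemma tclass_one:
  "\<lbrakk>dary d T; dary d U; nleaves T = nleaves U\<rbrakk> \<Longrightarrow>
    cls (T, \<one>\<^bsub>G (nleaves T)\<^esub>, U) = fd_class (tree_pair_rel d T U)"
  using tclass_unit[of "(T, \<one>\<^bsub>G (nleaves T)\<^esub>, U)"] by (simp add: mem_unit_triples triple_rel_def)

lemma Fd_eq: "Fd d G \<rho> \<kappa> = fd_class ` dary_pair_rels"
proof (intro equalityI subsetI)
  fix X assume "X \<in> Fd d G \<rho> \<kappa>"
  then obtain T U where X: "X = cls (T, \<one>\<^bsub>G (nleaves T)\<^esub>, U)"
    and TU: "dary d T" "dary d U" "nleaves T = nleaves U" unfolding Fd_def by blast
  then have "X = fd_class (tree_pair_rel d T U)" using tclass_one[OF TU] by simp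
  with TU show "X \<in> fd_class ` dary_pair_rels" unfolding dary_pair_rels_def by blast
next
  fix X assume "X \<in> fd_class ` dary_pair_rels"
  then obtain T U where X: "X = fd_class (tree_pair_rel d T U)"
    and TU: "dary d T" "dary d U" "nleaves T = nleaves U" unfolding dary_pair_rels_def by blast
  then have "X = cls (T, \<one>\<^bsub>G (nleaves T)\<^esub>, U)" using tclass_one[OF TU] by simp
  with TU show "X \<in> Fd d G \<rho> \<kappa>" unfolding Fd_def by blast
qed

lemma mem_fd_class:
  "(T, g, U) \<in> fd_class r \<longleftrightarrow> dary d T \<and> dary d U \<and> nleaves T = nleaves U
     \<and> g = \<one>\<^bsub>G (nleaves T)\<^esub> \<and> tree_pair_rel d T U = r"
  by (auto simp: fd_class_def mem_unit_triples triple_rel_def)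

lemma fd_class_swap:
  assumes "(T, g, U) \<in> fd_class r"
  shows "(U, \<one>\<^bsub>G (nleaves U)\<^esub>, T) \<in> fd_class (r\<inverse>)"
proof -
  have "r\<inverse> = tree_pair_rel d U T"
    using assms converse_tree_pair_rel[of T U d] by (simp add: mem_fd_class)
  with assms show ?thesis by (simp add: mem_fd_class)
qed

lemma fd_class_nonempty:
  assumes "r \<in> dary_pair_rels"
  obtains T U where "(T, \<one>\<^bsub>G (nleaves T)\<^esub>, U) \<in> fd_class r"
  using assms by (auto simp: dary_pair_rels_def mem_fd_class)

lemma fd_class_common_middle:
  assumes "r1 \<in> dary_pair_rels" "r2 \<in> dary_pair_rels"
  obtains A F B where "(A, \<one>\<^bsub>G (nleaves A)\<^esub>, F) \<in> fd_class r1"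
    "(F, \<one>\<^bsub>G (nleaves F)\<^esub>, B) \<in> fd_class r2"
proof -
  obtain A1 B1 where 1: "(A1, \<one>\<^bsub>G (nleaves A1)\<^esub>, B1) \<in> fd_class r1"
    using fd_class_nonempty[OF assms(1)] .
  obtain A2 B2 where "(A2, \<one>\<^bsub>G (nleaves A2)\<^esub>, B2) \<in> fd_class r2"
    using fd_class_nonempty[OF assms(2)] .
  then have 2: "(B2, \<one>\<^bsub>G (nleaves B2)\<^esub>, A2) \<in> fd_class (r2\<inverse>)" by (rule fd_class_swap)
  define h where "h = max (size B1) (size A2)"
  have u: "(A1, \<one>\<^bsub>G (nleaves A1)\<^esub>, B1) \<in> unit_triples"
    "(B2, \<one>\<^bsub>G (nleaves B2)\<^esub>, A2) \<in> unit_triples"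
    using 1 2 by (simp_all add: fd_class_def)
  have h: "size B1 \<le> h" "size A2 \<le> h" by (simp_all add: h_def)
  have rel: "tree_pair_rel d A1 B1 = r1" "tree_pair_rel d B2 A2 = r2\<inverse>"
    using 1 2 by (simp_all add: mem_fd_class)
  obtain A where "((A1, \<one>\<^bsub>G (nleaves A1)\<^esub>, B1), (A, \<one>\<^bsub>G (nleaves A)\<^esub>, full d h)) \<in> eqv"
    and A: "(A, \<one>\<^bsub>G (nleaves A)\<^esub>, full d h) \<in> fd_class (tree_pair_rel d A1 B1)"
    by (rule unit_triple_equiv_full[OF u(1) h(1)])
  obtain B where "((B2, \<one>\<^bsub>G (nleaves B2)\<^esub>, A2), (B, \<one>\<^bsub>G (nleaves B)\<^esub>, full d h)) \<in> eqv"
    and B: "(B, \<one>\<^bsub>G (nleaves B)\<^esub>, full d h) \<in> fd_class (tree_pair_rel d B2 A2)"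
    by (rule unit_triple_equiv_full[OF u(2) h(2)])
  from fd_class_swap[OF B[unfolded rel]]
  have "(full d h, \<one>\<^bsub>G (nleaves (full d h))\<^esub>, B) \<in> fd_class r2" by simp
  with A[unfolded rel] that show thesis by blast
qed

lemma Td_inv_fd_class:
  assumes "r \<in> dary_pair_rels"
  shows "Td_inv d G \<rho> \<kappa> (fd_class r) = fd_class (r\<inverse>)"
  unfolding Td_inv_def
proof (rule Union_eq_constI)
  obtain T U where "(T, \<one>\<^bsub>G (nleaves T)\<^esub>, U) \<in> fd_class r"
    using fd_class_nonempty[OF assms] .
  then show "{cls (U, inv\<^bsub>G (nleaves T)\<^esub> g, T) | T g U. (T, g, U) \<in> fd_class r} \<noteq> {}" by blast
next
  fix X assume "X \<in> {cls (U, inv\<^bsub>G (nleaves T)\<^esub> g, T) | T g U. (T, g, U) \<in> fd_class r}"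
  then obtain T g U where X: "X = cls (U, inv\<^bsub>G (nleaves T)\<^esub> g, T)" and
    m: "(T, g, U) \<in> fd_class r" by blast
  then have "nleaves T \<ge> 1" "g = \<one>\<^bsub>G (nleaves T)\<^esub>" "nleaves T = nleaves U"
    using two_le_d nleaves_pos[of d T] by (auto simp: mem_fd_class)
  then have "X = cls (U, \<one>\<^bsub>G (nleaves U)\<^esub>, T)"
    using X monoid.inv_one[OF group.is_monoid[OF group_G]] by simp
  also have "\<dots> = fd_class (r\<inverse>)"
    using fd_class_swap[OF m] tclass_unit by (simp add: fd_class_def)
  finally show "X = fd_class (r\<inverse>)" .
qed

lemma Td_mult_fd_class:
  assumes "r1 \<in> dary_pair_rels" "r2 \<in> dary_pair_rels"
  shows "Td_mult d G \<rho> \<kappa> (fd_class r1) (fd_class r2) = fd_class (r1 O r2)"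
  unfolding Td_mult_def
proof (rule Union_eq_constI)
  obtain A F B where "(A, \<one>\<^bsub>G (nleaves A)\<^esub>, F) \<in> fd_class r1"
    "(F, \<one>\<^bsub>G (nleaves F)\<^esub>, B) \<in> fd_class r2"
    using fd_class_common_middle[OF assms] .
  then show "{cls (T, g \<otimes>\<^bsub>G (nleaves T)\<^esub> h, W) | T g U h W.
      (T, g, U) \<in> fd_class r1 \<and> (U, h, W) \<in> fd_class r2} \<noteq> {}" by blast
next
  fix X assume "X \<in> {cls (T, g \<otimes>\<^bsub>G (nleaves T)\<^esub> h, W) | T g U h W.
      (T, g, U) \<in> fd_class r1 \<and> (U, h, W) \<in> fd_class r2}"
  then obtain T g U h W where X: "X = cls (T, g \<otimes>\<^bsub>G (nleaves T)\<^esub> h, W)" and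
    m: "(T, g, U) \<in> fd_class r1" "(U, h, W) \<in> fd_class r2" by blast
  have TW: "dary d T" "dary d W" "nleaves T = nleaves W"
    using m unfolding mem_fd_class by auto
  have "nleaves T \<ge> 1" using nleaves_pos[of d T] TW(1) two_le_d by simp
  moreover have "g = \<one>\<^bsub>G (nleaves T)\<^esub>" "h = \<one>\<^bsub>G (nleaves T)\<^esub>"
    using m unfolding mem_fd_class by auto
  ultimately have "X = cls (T, \<one>\<^bsub>G (nleaves T)\<^esub>, W)"
    using X monoid.l_one[OF group.is_monoid[OF group_G] one_closed_G] by simp
  also have "\<dots> = fd_class (tree_pair_rel d T W)" using tclass_one[OF TW] .
  also have "tree_pair_rel d T W = r1 O r2"
    using m relcomp_tree_pair_rel[of T U W d] unfolding mem_fd_class by auto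
  finally show "X = fd_class (r1 O r2)" .
qed

lemma relcomp_in_dary_pair_rels:
  assumes "r1 \<in> dary_pair_rels" "r2 \<in> dary_pair_rels"
  shows "r1 O r2 \<in> dary_pair_rels"
proof -
  obtain A F B where m: "(A, \<one>\<^bsub>G (nleaves A)\<^esub>, F) \<in> fd_class r1"
    "(F, \<one>\<^bsub>G (nleaves F)\<^esub>, B) \<in> fd_class r2"
    using fd_class_common_middle[OF assms] .
  then have "r1 O r2 = tree_pair_rel d A B" "dary d A" "dary d B" "nleaves A = nleaves B"
    using relcomp_tree_pair_rel[of A F B d] unfolding mem_fd_class by auto
  then show ?thesis unfolding dary_pair_rels_def by blast
qed

lemma converse_in_dary_pair_rels: "r \<in> dary_pair_rels \<Longrightarrow> r\<inverse> \<in> dary_pair_rels"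
  unfolding dary_pair_rels_def using converse_tree_pair_rel by fastforce

section \<open>The normaliser of \<open>F\<^sub>d\<close>\<close>

lemma dary_pair_rels_subset: "r \<in> dary_pair_rels \<Longrightarrow> r \<subseteq> words d \<times> words d"
  unfolding dary_pair_rels_def using tree_pair_rel_subset by blast

lemma converse_relcomp_self:
  assumes "r \<in> dary_pair_rels"
  shows "r\<inverse> O r = Id_on (words d)"
proof -
  obtain A B where AB: "r = tree_pair_rel d A B" "dary d A" "dary d B" "nleaves A = nleaves B"
    using assms unfolding dary_pair_rels_def by blast
  then have "r\<inverse> O r = tree_pair_rel d B A O tree_pair_rel d A B"
    using converse_tree_pair_rel[of A B d] by simp
  also have "\<dots> = tree_pair_rel d B B" using relcomp_tree_pair_rel[of B A B d] AB(4) by simp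
  also have "\<dots> = Id_on (words d)" using tree_pair_rel_diag[OF AB(3)] .
  finally show ?thesis .
qed

lemma Td_conj_fd_class:
  assumes r: "r \<in> dary_pair_rels" and s: "s \<in> dary_pair_rels"
  shows "Td_mult d G \<rho> \<kappa> (Td_inv d G \<rho> \<kappa> (fd_class r)) (Td_mult d G \<rho> \<kappa> (fd_class s) (fd_class r))
    = fd_class (r\<inverse> O (s O r))"
proof -
  have "Td_mult d G \<rho> \<kappa> (fd_class s) (fd_class r) = fd_class (s O r)"
    using Td_mult_fd_class[OF s r] .
  moreover have "Td_inv d G \<rho> \<kappa> (fd_class r) = fd_class (r\<inverse>)" using Td_inv_fd_class[OF r] .
  ultimately show ?thesis
    using Td_mult_fd_class[OF converse_in_dary_pair_rels[OF r] relcomp_in_dary_pair_rels[OF s r]]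
    by simp
qed

lemma Fd_subset_normalizer: "Fd d G \<rho> \<kappa> \<subseteq> Td_normalizer d G \<rho> \<kappa> (Fd d G \<rho> \<kappa>)"
proof
  fix x assume "x \<in> Fd d G \<rho> \<kappa>"
  then obtain r where r: "r \<in> dary_pair_rels" "x = fd_class r" by (auto simp: Fd_eq)
  let ?conj = "\<lambda>f. Td_mult d G \<rho> \<kappa> (Td_inv d G \<rho> \<kappa> x) (Td_mult d G \<rho> \<kappa> f x)"
  obtain A B where m: "(A, \<one>\<^bsub>G (nleaves A)\<^esub>, B) \<in> fd_class r"
    using fd_class_nonempty[OF r(1)] .
  then have "cls (A, \<one>\<^bsub>G (nleaves A)\<^esub>, B) = x" "(A, \<one>\<^bsub>G (nleaves A)\<^esub>, B) \<in> trip"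
    using tclass_unit r(2) unfolding fd_class_def unit_triples_def by auto
  then have "x \<in> Td_carrier d G \<rho> \<kappa>" unfolding Td_carrier_def by blast
  moreover have "{?conj f | f. f \<in> fd_class ` dary_pair_rels} = fd_class ` dary_pair_rels"
  proof (intro equalityI subsetI)
    fix y assume "y \<in> {?conj f | f. f \<in> fd_class ` dary_pair_rels}"
    then obtain s where s: "s \<in> dary_pair_rels" "y = ?conj (fd_class s)" by blast
    then have "y = fd_class (r\<inverse> O (s O r))" using Td_conj_fd_class[OF r(1) s(1)] r(2) by simp
    then show "y \<in> fd_class ` dary_pair_rels"
      using relcomp_in_dary_pair_rels converse_in_dary_pair_rels r(1) s(1) by blast
  next
    fix y assume "y \<in> fd_class ` dary_pair_rels"
    then obtain s where s: "s \<in> dary_pair_rels" "y = fd_class s" by blast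
    let ?s = "r O (s O r\<inverse>)"
    have s': "?s \<in> dary_pair_rels"
      using relcomp_in_dary_pair_rels converse_in_dary_pair_rels r(1) s(1) by blast
    have "r\<inverse> O (?s O r) = (r\<inverse> O r) O s O (r\<inverse> O r)" by (simp add: O_assoc)
    also have "\<dots> = s"
      using converse_relcomp_self[OF r(1)] Id_on_relcomp_Id_on[OF dary_pair_rels_subset[OF s(1)]]
      by simp
    finally have "?conj (fd_class ?s) = y" using Td_conj_fd_class[OF r(1) s'] s(2) r(2) by simp
    with s' show "y \<in> {?conj f | f. f \<in> fd_class ` dary_pair_rels}" by blast
  qed
  ultimately show "x \<in> Td_normalizer d G \<rho> \<kappa> (Fd d G \<rho> \<kappa>)"
    unfolding Td_normalizer_def Fd_eq by blast
qed

lemma triple_equiv_large: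
  assumes "x \<in> trip"
  obtains y where "(x, y) \<in> eqv" "m \<le> nleaves (fst y)"
proof -
  obtain T g U where x: "x = (T, g, U)" by (cases x)
  define h where "h = max (size U) m"
  have "expands d U (full d h)"
    using assms x two_le_d by (intro expands_full) (auto simp: mem_triples h_def)
  then obtain T' g' where eq: "(x, (T', g', full d h)) \<in> eqv"
    using triple_equiv_expand_right assms x by blast
  have "m \<le> h" "(2::nat) ^ h \<le> d ^ h" using two_le_d by (simp_all add: h_def power_mono)
  then have "m \<le> d ^ h" using less_exp[of h] by linarith
  moreover have "nleaves T' = d ^ h"
    using eq unfolding triple_equiv_def by (auto simp: mem_triples nleaves_full)
  ultimately have "m \<le> nleaves (fst (T', g', full d h))" by simp
  with eq that show thesis by blast
qed

lemma label_one_of_mem_Fd: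
  "\<lbrakk>X \<in> Fd d G \<rho> \<kappa>; (T, g, U) \<in> X\<rbrakk> \<Longrightarrow> g = \<one>\<^bsub>G (nleaves T)\<^esub>"
  by (auto simp: Fd_eq mem_fd_class)

lemma Td_mult_memI:
  "\<lbrakk>(T, g, U) \<in> X; (U, h, W) \<in> Y; (T, g \<otimes>\<^bsub>G (nleaves T)\<^esub> h, W) \<in> trip\<rbrakk>
    \<Longrightarrow> (T, g \<otimes>\<^bsub>G (nleaves T)\<^esub> h, W) \<in> Td_mult d G \<rho> \<kappa> X Y"
  unfolding Td_mult_def tclass_def using equiv_class_self[OF equiv_triple_equiv] by blast

lemma Td_inv_memI:
  "\<lbrakk>(T, g, U) \<in> X; y \<in> cls (U, inv\<^bsub>G (nleaves T)\<^esub> g, T)\<rbrakk> \<Longrightarrow> y \<in> Td_inv d G \<rho> \<kappa> X"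
  unfolding Td_inv_def by blast

lemma mem_tclass_expansion:
  "\<lbrakk>(T, g, U) \<in> trip; k \<in> {1..nleaves T}\<rbrakk> \<Longrightarrow>
    (caret d (\<rho> (nleaves T) g k) T, \<kappa> (nleaves T) k g, caret d k U) \<in> cls (T, g, U)"
  unfolding tclass_def using expansion_in_triple_equiv[OF expansionI] by blast

lemma tclass_caret_pair_in_Fd:
  assumes "dary d T" "i \<in> {1..nleaves T}" "j \<in> {1..nleaves T}"
  shows "cls (caret d i T, \<one>\<^bsub>G (nleaves (caret d i T))\<^esub>, caret d j T) \<in> Fd d G \<rho> \<kappa>"
proof -
  have "nleaves (caret d i T) = nleaves (caret d j T)"
    using assms two_le_d by (simp add: nleaves_caret)
  then show ?thesis unfolding Fd_def using dary_caret(1)[OF assms(1)] by blast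
qed

lemma mem_Td_inv_expansion:
  assumes "(T, g, U) \<in> trip" "a \<in> {1..nleaves T}"
  shows "(caret d (\<rho> (nleaves T) (inv\<^bsub>G (nleaves T)\<^esub> g) a) U,
      \<kappa> (nleaves T) a (inv\<^bsub>G (nleaves T)\<^esub> g), caret d a T) \<in> Td_inv d G \<rho> \<kappa> (cls (T, g, U))"
proof -
  have n: "nleaves T \<ge> 1" using nleaves_pos_triple[OF assms(1)] .
  have "inv\<^bsub>G (nleaves T)\<^esub> g \<in> carrier (G (nleaves T))"
    using assms(1) group.inv_closed[OF group_G[OF n]] unfolding mem_triples by blast
  then have "(U, inv\<^bsub>G (nleaves T)\<^esub> g, T) \<in> trip" using assms(1) by (auto simp: mem_triples)
  from mem_tclass_expansion[OF this] show ?thesis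
    using Td_inv_memI equiv_class_self[OF equiv_triple_equiv assms(1)] assms
    by (simp add: tclass_def mem_triples)
qed

lemma normalizer_kappa_inv:
  assumes N: "cls (T, g, U) \<in> Td_normalizer d G \<rho> \<kappa> (Fd d G \<rho> \<kappa>)"
    and tr: "(T, g, U) \<in> trip" and a: "a \<in> {1..nleaves T}"
  shows "\<kappa> (nleaves T) a (inv\<^bsub>G (nleaves T)\<^esub> g) = inv\<^bsub>G (nleaves T + d - 1)\<^esub> (\<kappa> (nleaves T) 1 g)"
proof -
  define n m x where "n = nleaves T" and "m = nleaves T + d - 1" and "x = cls (T, g, U)"
  have n: "n \<ge> 1" and one: "1 \<in> {1..n}" and a': "a \<in> {1..n}"
    using nleaves_pos_triple[OF tr] a by (simp_all add: n_def)
  have TU: "dary d T" "dary d U" "nleaves T = n" "nleaves U = n"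
    using tr unfolding mem_triples n_def by auto
  have g: "g \<in> carrier (G n)" using tr unfolding mem_triples n_def by blast
  interpret Gm: group "G m" using group_G_expanded[OF n] by (simp add: m_def n_def)
  have ig: "inv\<^bsub>G n\<^esub> g \<in> carrier (G n)" using group.inv_closed[OF group_G[OF n] g] .
  have nl: "nleaves (caret d i V) = m" if "i \<in> {1..n}" "nleaves V = n" for i V
    using that two_le_d by (simp add: nleaves_caret m_def n_def)
  have in_trip: "(caret d i A, h, caret d j B) \<in> trip"
    if "i \<in> {1..n}" "j \<in> {1..n}" "A \<in> {T, U}" "B \<in> {T, U}" "h \<in> carrier (G m)" for i j A B h
    using that TU two_le_d by (auto simp: mem_triples dary_caret nl)
  define c k1 ka where "c = \<rho> n g 1" and "k1 = \<kappa> n 1 g" and "ka = \<kappa> n a (inv\<^bsub>G n\<^esub> g)"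
  have c: "c \<in> {1..n}" using rho_in_range[OF n g one] by (simp add: c_def)
  have k: "k1 \<in> carrier (G m)" "ka \<in> carrier (G m)"
    using kappa_closed[OF n one g] kappa_closed[OF n a' ig] by (simp_all add: k1_def ka_def m_def n_def)
  have in_x: "(caret d c T, k1, caret d 1 U) \<in> x"
    using mem_tclass_expansion[OF tr, of 1] n by (simp add: x_def c_def k1_def n_def)
  have in_inv: "(caret d (\<rho> n (inv\<^bsub>G n\<^esub> g) a) U, ka, caret d a T) \<in> Td_inv d G \<rho> \<kappa> x"
    using mem_Td_inv_expansion[OF tr a] by (simp add: x_def ka_def n_def)
  define f where "f = cls (caret d a T, \<one>\<^bsub>G m\<^esub>, caret d c T)"
  have f: "f \<in> Fd d G \<rho> \<kappa>"
    using tclass_caret_pair_in_Fd[OF TU(1) a, of c] c nl[OF a' TU(3)] by (simp add: f_def n_def)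
  have in_f: "(caret d a T, \<one>\<^bsub>G m\<^esub>, caret d c T) \<in> f" unfolding f_def tclass_def
    using equiv_class_self[OF equiv_triple_equiv in_trip[OF a' c insertI1 insertI1 Gm.one_closed]] .
  have "(caret d a T, k1, caret d 1 U) \<in> Td_mult d G \<rho> \<kappa> f x"
    using Td_mult_memI[OF in_f in_x] in_trip[OF a' one _ _ k(1)] nl[OF a' TU(3)] k(1) by simp
  then have "(caret d (\<rho> n (inv\<^bsub>G n\<^esub> g) a) U, ka \<otimes>\<^bsub>G m\<^esub> k1, caret d 1 U)
      \<in> Td_mult d G \<rho> \<kappa> (Td_inv d G \<rho> \<kappa> x) (Td_mult d G \<rho> \<kappa> f x)"
    using Td_mult_memI[OF in_inv] rho_in_range[OF n ig a'] nl[OF _ TU(4)]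
      in_trip[OF rho_in_range[OF n ig a'] one _ _ Gm.m_closed[OF k(2,1)]]
    by simp
  moreover have "Td_mult d G \<rho> \<kappa> (Td_inv d G \<rho> \<kappa> x) (Td_mult d G \<rho> \<kappa> f x) \<in> Fd d G \<rho> \<kappa>"
    using N f unfolding Td_normalizer_def x_def by blast
  ultimately have "ka \<otimes>\<^bsub>G m\<^esub> k1 = \<one>\<^bsub>G m\<^esub>"
    using label_one_of_mem_Fd nl[OF rho_in_range[OF n ig a'] TU(4)] by fastforce
  then show ?thesis using Gm.inv_equality[OF _ k(1,2)] by (simp add: m_def n_def k1_def ka_def)
qed

lemma normalizer_subset_Fd:
  assumes "diverse d G \<kappa>"
  shows "Td_normalizer d G \<rho> \<kappa> (Fd d G \<rho> \<kappa>) \<subseteq> Fd d G \<rho> \<kappa>"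
proof
  fix x assume N: "x \<in> Td_normalizer d G \<rho> \<kappa> (Fd d G \<rho> \<kappa>)"
  obtain n0 where n0: "\<And>n. \<lbrakk>n \<ge> n0; n \<ge> 1\<rbrakk> \<Longrightarrow>
      (\<Inter>k\<in>{1..n}. \<kappa> n k ` carrier (G n)) = {\<one>\<^bsub>G (n + d - 1)\<^esub>}"
    using assms unfolding diverse_def by blast
  obtain x0 where x0: "x0 \<in> trip" "x = cls x0"
    using N unfolding Td_normalizer_def Td_carrier_def by blast
  obtain T g U where eq: "(x0, (T, g, U)) \<in> eqv" and big: "n0 \<le> nleaves T"
    using triple_equiv_large[OF x0(1), of n0] by (metis prod.collapse fst_conv)
  define n where "n = nleaves T"
  have tr: "(T, g, U) \<in> trip" using eq unfolding triple_equiv_def by blast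
  have x: "x = cls (T, g, U)"
    using x0(2) equiv_class_eq[OF equiv_triple_equiv eq] by (simp add: tclass_def)
  have n: "n \<ge> 1" using nleaves_pos_triple[OF tr] by (simp add: n_def)
  have g: "g \<in> carrier (G n)" using tr unfolding mem_triples n_def by blast
  have "inv\<^bsub>G (n + d - 1)\<^esub> (\<kappa> n 1 g) \<in> \<kappa> n a ` carrier (G n)" if "a \<in> {1..n}" for a
    using normalizer_kappa_inv[OF N[unfolded x] tr, of a] that group.inv_closed[OF group_G[OF n] g]
    unfolding n_def by (metis image_eqI)
  then have "inv\<^bsub>G (n + d - 1)\<^esub> (\<kappa> n 1 g) = \<one>\<^bsub>G (n + d - 1)\<^esub>"
    using n0[of n] n big by (auto simp: n_def)
  then have "\<kappa> n 1 g = \<one>\<^bsub>G (n + d - 1)\<^esub>"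
    using group.inv_eq_1_iff[OF group_G_expanded[OF n] kappa_closed[OF n _ g]] n by auto
  then have "g = \<one>\<^bsub>G n\<^esub>" using kappa_eq_one_iff[OF n _ g] n by auto
  then show "x \<in> Fd d G \<rho> \<kappa>"
    using x tr unfolding Fd_def mem_triples n_def by blast
qed

end

theorem mainTheorem3:
  fixes d :: nat and G :: "nat \<Rightarrow> 'g monoid" and \<rho> :: "nat \<Rightarrow> 'g \<Rightarrow> nat \<Rightarrow> nat"
    and \<kappa> :: "nat \<Rightarrow> nat \<Rightarrow> 'g \<Rightarrow> 'g"
  assumes "d \<ge> 2"
    and "cloning_system d G \<rho> \<kappa>"
    and "diverse d G \<kappa>"
  shows "Td_normalizer d G \<rho> \<kappa> (Fd d G \<rho> \<kappa>) = Fd d G \<rho> \<kappa>"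
proof -
  interpret dary_cloning_system d G \<rho> \<kappa> using assms(1,2) by unfold_locales
  show ?thesis using Fd_subset_normalizer normalizer_subset_Fd[OF assms(3)] by blast
qed

end
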